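(* The variational equations of the slowly varying envelope (SVE) approximation imply the following Kelvin circulation theorem \begin{align} \frac{d}{dt}\oint_{c(\mathbf{\widehat v})} \Big( \mathbf{\widehat{v}}\cdot d\mathbf{r} + {\cal N} d \frac{d\theta}{dt} \Big) = - \oint_{c(\mathbf{\widehat v})} \frac{1}{\rho}dp\,. \end{align}
   Context: Setting: a 2D free surface model with divergence-free horizontal current velocity $\mathbf{\widehat v}(\mathbf{r},t)$ carrying a vertical wave elevation, in the WKB/SVE approximation $\zeta = \Re\big(a(\mathbf{r},t)e^{i\theta(\mathbf{r},t)/\epsilon}\big)$, $\epsilon\ll1$. The leading-order action is $S_{SVE}=\int_a^b\int_{\cal D} \tfrac{1}{2}D\rho |\mathbf{\widehat{v}}|^2 - p(D-1) + \tfrac{\sigma^2|a|^2}{8\epsilon^2} D\rho \Big( \big(\tfrac{d\theta}{dt}\big)^2 - \tfrac{\rho_{ref}}{\rho} \tfrac{\epsilon^2}{\sigma^2 Fr^2} \Big)\,d^2r\,dt$, with $\frac{d\theta}{dt} = \partial_t\theta + \mathbf{\widehat v}\cdot\nabla_{\mathbf{r}}\theta$, constants $\sigma^2,Fr^2,\rho_{ref}$ with $\epsilon^2/(\sigma^2Fr^2)=O(1)$, advected areal density $D\,d^2r$ and buoyancy $\rho$, and pressure $p$ enforcing $D=1$. Here ${\cal N}:= \sigma^2|a|^2/(4\epsilon^2)$. The variations give $d\theta/dt=\sqrt{\rho\rho_{ref}}/\rho$, conservation of wave action, and advection of $|a|^2$. The loop $c(\mathbf{\widehat v})$ moves with the horizontal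 flow. *)

theory Defs
  imports "HOL-Analysis.Analysis"
begin

definition C1fun :: "('a::real_normed_vector \<Rightarrow> 'b::real_normed_vector) \<Rightarrow> bool" where
  "C1fun F \<longleftrightarrow> (\<exists>F'. (\<forall>z. (F has_derivative blinfun_apply (F' z)) (at z)) \<and> continuous_on UNIV F')"

definition C2fun :: "('a::real_normed_vector \<Rightarrow> 'b::real_normed_vector) \<Rightarrow> bool" where
  "C2fun F \<longleftrightarrow> (\<exists>F'. (\<forall>z. (F has_derivative blinfun_apply (F' z)) (at z)) \<and> C1fun F')"

definition smooth2 :: "(real \<Rightarrow> 'a::real_normed_vector \<Rightarrow> 'b::real_normed_vector) \<Rightarrow> bool" where
  "smooth2 f \<longleftrightarrow> C2fun (\<lambda>z. f (fst z) (snd z))"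

definition dt :: "(real \<Rightarrow> 'a \<Rightarrow> 'b::real_normed_vector) \<Rightarrow> real \<Rightarrow> 'a \<Rightarrow> 'b" where
  "dt f t x = vector_derivative (\<lambda>s. f s x) (at t)"

definition pd :: "(real^2 \<Rightarrow> 'b::real_normed_vector) \<Rightarrow> 2 \<Rightarrow> real^2 \<Rightarrow> 'b" where
  "pd f i x = frechet_derivative f (at x) (axis i 1)"

definition grad :: "(real^2 \<Rightarrow> real) \<Rightarrow> real^2 \<Rightarrow> real^2" where
  "grad f x = (\<chi> i. pd f i x)"

definition divg :: "(real^2 \<Rightarrow> real^2) \<Rightarrow> real^2 \<Rightarrow> real" where
  "divg F x = (\<Sum>i\<in>UNIV. pd (\<lambda>y. F y $ i) i x)"

definition matd :: "(real \<Rightarrow> real^2 \<Rightarrow> real^2) \<Rightarrow> (real \<Rightarrow> real^2 \<Rightarrow> real) \<Rightarrow> real \<Rightarrow> real^2 \<Rightarrow> real" where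
  "matd v f t x = dt f t x + v t x \<bullet> grad (f t) x"

definition waveN :: "real \<Rightarrow> real \<Rightarrow> (real \<Rightarrow> real^2 \<Rightarrow> complex) \<Rightarrow> real \<Rightarrow> real^2 \<Rightarrow> real" where
  "waveN \<sigma> \<epsilon> a t x = \<sigma>\<^sup>2 * (cmod (a t x))\<^sup>2 / (4 * \<epsilon>\<^sup>2)"

text \<open>Variational derivatives of the reduced SVE Lagrangian
  l = \<integral> 1/2 D rho |v|^2 - p(D-1) + (N/2) D rho ((d theta/dt)^2 - (rho_ref/rho) K),
  K = eps^2/(sigma^2 Fr^2).\<close>

definition Kconst :: "real \<Rightarrow> real \<Rightarrow> real \<Rightarrow> real" where
  "Kconst \<sigma> \<epsilon> Fr = \<epsilon>\<^sup>2 / (\<sigma>\<^sup>2 * Fr\<^sup>2)"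

definition SVE_mom where
  "SVE_mom \<sigma> \<epsilon> v D \<rho> \<theta> a t x =
     (D t x * \<rho> t x) *\<^sub>R (v t x + (waveN \<sigma> \<epsilon> a t x * matd v \<theta> t x) *\<^sub>R grad (\<theta> t) x)"

definition SVE_dD where
  "SVE_dD \<sigma> \<epsilon> Fr \<rho>ref v \<rho> \<theta> a p t x =
     1/2 * \<rho> t x * (norm (v t x))\<^sup>2 - p t x
     + waveN \<sigma> \<epsilon> a t x / 2 * \<rho> t x * ((matd v \<theta> t x)\<^sup>2 - \<rho>ref / \<rho> t x * Kconst \<sigma> \<epsilon> Fr)"

definition SVE_drho where
  "SVE_drho \<sigma> \<epsilon> v D \<theta> a t x =
     1/2 * D t x * (norm (v t x))\<^sup>2 + waveN \<sigma> \<epsilon> a t x / 2 * D t x * (matd v \<theta> t x)\<^sup>2"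

definition circ :: "(real^2 \<Rightarrow> real^2) \<Rightarrow> (real \<Rightarrow> real^2) \<Rightarrow> real" where
  "circ \<alpha> \<gamma> = integral {0..1} (\<lambda>s. \<alpha> (\<gamma> s) \<bullet> vector_derivative \<gamma> (at s))"

end

theory Submission
  imports Defs
begin

(* Wherever a \<noteq> 0 the amplitude equation is the dispersion relation
   (d\<theta>/dt)^2 = \<rho>ref K / \<rho>, so N ((d\<theta>/dt)^2 - \<rho>ref K / \<rho>) = 0 everywhere, and differentiating
   it gives N \<nabla>(d\<theta>/dt) = g \<nabla>\<rho> with g = - N (d\<theta>/dt) / (2 \<rho>). Hence the wave part of the
   circulation integrand is g d\<rho>. As N and \<rho> are advected, so is g, and d\<rho> applied to the
   tangent of the moving loop is conserved; so the wave part does not change the circulation.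
   In the Euler-Poincare equation the same relation, incompressibility, the advection laws and
   the symmetry of the second derivatives of \<theta> cancel every wave term and leave
   \<rho> Dv/Dt = - \<nabla>p. Besides the pressure term, the rate of change of the circulation then
   only contains v \<bullet> \<partial>\<^sub>s(v \<circ> c) = \<partial>\<^sub>s |v \<circ> c|^2 / 2, which integrates to zero around the loop. *)

lemma vector_derivative_chain_at:
  assumes "(g has_vector_derivative g') (at s)" and "(f has_derivative f') (at (g s))"
  shows "((\<lambda>\<sigma>. f (g \<sigma>)) has_vector_derivative f' g') (at s)"
  using vector_derivative_diff_chain_within[of g g' s UNIV f f'] assms
  by (simp add: o_def has_derivative_at_withinI)

lemma has_vector_derivative_along_line:
  assumes "(G has_derivative G') (at (y + s *\<^sub>R d))"
  shows "((\<lambda>s. G (y + s *\<^sub>R d)) has_vector_derivative G' d) (at s)"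
  by (rule vector_derivative_chain_at[where g="\<lambda>s. y + s *\<^sub>R d", OF _ assms])
    (auto intro!: derivative_eq_intros)

lemma has_vector_derivative_fst_slice:
  assumes "(F has_derivative F') (at (t, x))"
  shows "((\<lambda>\<tau>. F (\<tau>, x)) has_vector_derivative F' (1, 0)) (at t)"
  by (rule vector_derivative_chain_at[where g="\<lambda>\<tau>. (\<tau>, x)", OF _ assms])
    (auto intro!: derivative_eq_intros)

lemma has_vector_derivative_snd_slice:
  assumes "(F has_derivative F') (at (t, s))"
  shows "((\<lambda>\<sigma>. F (t, \<sigma>)) has_vector_derivative F' (0, 1)) (at s)"
  by (rule vector_derivative_chain_at[where g="\<lambda>\<sigma>. (t, \<sigma>)", OF _ assms])
    (auto intro!: derivative_eq_intros)

lemma has_derivative_snd_slice: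
  assumes "(F has_derivative F') (at (t, x))"
  shows "((\<lambda>y. F (t, y)) has_derivative (\<lambda>h. F' (0, h))) (at x)"
  using has_derivative_compose[OF has_derivative_Pair[OF has_derivative_const has_derivative_ident] assms]
  by simp

lemma continuous_on_slice:
  assumes "continuous_on UNIV (\<lambda>w. F (fst w) (snd w))"
  shows "continuous_on X (F t)"
proof -
  have "continuous_on X (\<lambda>s. (t, s))" by (intro continuous_intros)
  from continuous_on_compose2[OF assms this] show ?thesis by simp
qed

lemma linear_Pair_split:
  assumes "linear L"
  shows "L (s, w) = s *\<^sub>R L (1, 0) + L (0, w)"
proof -
  have "(s, w) = s *\<^sub>R (1, 0) + (0, w)" by simp
  then show ?thesis using assms by (metis linear_add linear_scale)
qed

lemma linear_Pair_zero_sum: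
  fixes L :: "'a::real_vector \<times> (real^'n) \<Rightarrow> 'b::real_vector"
  assumes "linear L"
  shows "L (0, w) = (\<Sum>i\<in>UNIV. w $ i *\<^sub>R L (0, axis i 1))"
proof -
  have "(0, w) = (\<Sum>i\<in>UNIV. w $ i *\<^sub>R (0::'a, axis i (1::real)))"
    using basis_expansion[of w] by (simp add: prod_eq_iff fst_sum snd_sum scalar_mult_eq_scaleR)
  then have "L (0, w) = (\<Sum>i\<in>UNIV. L (w $ i *\<^sub>R (0, axis i 1)))"
    by (metis linear_sum[OF assms])
  then show ?thesis
    by (simp only: linear_scale[OF assms])
qed

lemma grad_inner_eq:
  assumes "(f has_derivative f') (at x)"
  shows "grad f x \<bullet> w = f' w"
proof -
  have "linear f'" using assms by (rule has_derivative_linear)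
  have "grad f x \<bullet> w = (\<Sum>i\<in>UNIV. w $ i * f' (axis i 1))"
    unfolding grad_def pd_def inner_vec_def frechet_derivative_at[OF assms, symmetric]
    by (simp add: mult.commute)
  also have "\<dots> = f' (\<Sum>i\<in>UNIV. w $ i *\<^sub>R axis i 1)"
    by (simp add: linear_sum[OF \<open>linear f'\<close>] linear_scale[OF \<open>linear f'\<close>])
  also have "\<dots> = f' w"
    using basis_expansion[of w] by (simp add: scalar_mult_eq_scaleR)
  finally show ?thesis .
qed

lemma dt_eq_derivative:
  assumes "((\<lambda>z. f (fst z) (snd z)) has_derivative f') (at (t, x))"
  shows "dt f t x = f' (1, 0)"
  unfolding dt_def using has_vector_derivative_fst_slice[OF assms]
  by (simp add: vector_derivative_at)

lemma pd_eq_derivative: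
  assumes "((\<lambda>z. f (fst z) (snd z)) has_derivative f') (at (t, x))"
  shows "pd (f t) i x = f' (0, axis i 1)"
proof -
  have "(f t has_derivative (\<lambda>h. f' (0, h))) (at x)"
    using has_derivative_snd_slice[OF assms] by simp
  from frechet_derivative_at[OF this] show ?thesis
    unfolding pd_def by metis
qed

lemma grad_inner_eq_derivative:
  assumes "((\<lambda>z. f (fst z) (snd z)) has_derivative f') (at (t, x))"
  shows "grad (f t) x \<bullet> w = f' (0, w)"
  using grad_inner_eq[OF has_derivative_snd_slice[OF assms]] by simp

lemma matd_eq_derivative:
  assumes "((\<lambda>z. f (fst z) (snd z)) has_derivative f') (at (t, x))"
  shows "matd v f t x = f' (1, v t x)"
  using linear_Pair_split[OF has_derivative_linear[OF assms], of 1 "v t x"]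
  unfolding matd_def dt_eq_derivative[OF assms] grad_inner_eq_derivative[OF assms, symmetric]
  by (simp add: inner_commute)

text \<open>Integrate F' along w and differentiate under the integral sign along u; differentiating
  the result at t = 0 gives the symmetry of F''.\<close>
lemma second_derivative_line_integral:
  fixes F :: "'a::real_normed_vector \<Rightarrow> 'b::banach"
    and F' :: "'a \<Rightarrow> 'a \<Rightarrow>\<^sub>L 'b" and F'' :: "'a \<Rightarrow> 'a \<Rightarrow>\<^sub>L 'a \<Rightarrow>\<^sub>L 'b"
  assumes F': "\<And>z. (F has_derivative F' z) (at z)"
    and F'': "\<And>z. (F' has_derivative F'' z) (at z)"
    and cont: "continuous_on UNIV F''"
    and "-1 \<le> t"
  shows "F' (z + t *\<^sub>R w) u - F' (z - w) u = integral {-1..t} (\<lambda>\<tau>. F'' (z + \<tau> *\<^sub>R w) u w)"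
proof -
  have F'_apply: "((\<lambda>y. F' y e) has_derivative (\<lambda>h. F'' y h e)) (at y)" for y e
    by (auto intro!: derivative_eq_intros F'')
  define k where "k s \<tau> = F' (z + s *\<^sub>R u + \<tau> *\<^sub>R w) w" for s \<tau>
  define k' where "k' s = (\<lambda>\<tau>. F'' (z + s *\<^sub>R u + \<tau> *\<^sub>R w) u w)" for s
  have "continuous_on UNIV F'"
    by (rule has_derivative_continuous_on) (rule F'')
  then have k_cont: "continuous_on X (k s)" for X s
    unfolding k_def by (auto intro!: continuous_intros continuous_on_compose2[of UNIV F'])
  have k'_cont: "continuous_on X (\<lambda>(s, \<tau>). k' s \<tau>)" for X
    unfolding k'_def split_beta by (auto intro!: continuous_intros continuous_on_compose2[OF cont])
  have "(k s has_integral F (z + s *\<^sub>R u + t *\<^sub>R w) - F (z + s *\<^sub>R u + (-1) *\<^sub>R w)) {-1..t}" for s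
    unfolding k_def
    by (rule fundamental_theorem_of_calculus[OF \<open>-1 \<le> t\<close>])
      (auto intro!: has_vector_derivative_at_within has_vector_derivative_along_line[OF F'])
  then have integral_k: "(\<lambda>s. integral (cbox (-1) t) (k s))
      = (\<lambda>s. F (z + t *\<^sub>R w + s *\<^sub>R u) - F (z - w + s *\<^sub>R u))"
    by (auto simp: integral_unique algebra_simps)
  have "((\<lambda>s. integral (cbox (-1) t) (k s)) has_vector_derivative integral (cbox (-1) t) (k' 0))
      (at 0 within UNIV)"
  proof (rule leibniz_rule_vector_derivative)
    show "((\<lambda>s. k s \<tau>) has_vector_derivative k' s \<tau>) (at s within UNIV)" for s \<tau>
      using has_vector_derivative_along_line[OF F'_apply, where y="z + \<tau> *\<^sub>R w" and d=u and s=s]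
      unfolding k_def k'_def by (simp add: algebra_simps)
  qed (auto intro: integrable_continuous_interval k_cont k'_cont)
  moreover have "((\<lambda>s. F (z + t *\<^sub>R w + s *\<^sub>R u) - F (z - w + s *\<^sub>R u))
      has_vector_derivative F' (z + t *\<^sub>R w) u - F' (z - w) u) (at 0)"
    by (auto intro!: has_vector_derivative_diff has_vector_derivative_along_line[where s=0, simplified] F')
  ultimately have "F' (z + t *\<^sub>R w) u - F' (z - w) u = integral {-1..t} (k' 0)"
    unfolding integral_k by (simp add: vector_derivative_unique_at)
  then show ?thesis by (simp add: k'_def)
qed

lemma second_derivative_symmetric:
  fixes F :: "'a::real_normed_vector \<Rightarrow> 'b::banach"
    and F' :: "'a \<Rightarrow> 'a \<Rightarrow>\<^sub>L 'b" and F'' :: "'a \<Rightarrow> 'a \<Rightarrow>\<^sub>L 'a \<Rightarrow>\<^sub>L 'b"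
  assumes F': "\<And>z. (F has_derivative F' z) (at z)"
    and F'': "\<And>z. (F' has_derivative F'' z) (at z)"
    and cont: "continuous_on UNIV F''"
  shows "F'' z u w = F'' z w u"
proof -
  let ?I = "\<lambda>t. integral {-1..t} (\<lambda>\<tau>. F'' (z + \<tau> *\<^sub>R w) u w)"
  have "((\<lambda>y. F' y u) has_derivative (\<lambda>h. F'' z h u)) (at z)"
    by (auto intro!: derivative_eq_intros F'')
  then have "((\<lambda>t. F' (z + t *\<^sub>R w) u - F' (z - w) u) has_vector_derivative F'' z w u) (at 0)"
    using has_vector_derivative_along_line[where s=0] by (auto intro!: derivative_eq_intros)
  then have "(?I has_vector_derivative F'' z w u) (at 0)"
    unfolding has_vector_derivative_def
    by (rule has_derivative_transform_within_open[where s="{-1<..}"])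
      (auto simp: second_derivative_line_integral[OF F' F'' cont])
  moreover have "(?I has_vector_derivative (\<lambda>\<tau>. F'' (z + \<tau> *\<^sub>R w) u w) 0) (at 0 within {-1..1})"
    by (rule integral_has_vector_derivative)
      (auto intro!: continuous_intros continuous_on_compose2[OF cont])
  then have "(?I has_vector_derivative F'' z u w) (at 0)"
    by (simp add: at_within_interior[of 0 "{-1..1}"])
  ultimately show ?thesis
    by (rule vector_derivative_unique_at[symmetric])
qed

lemma has_integral_inner_derivative_closed:
  fixes u :: "real \<Rightarrow> 'a::real_inner"
  assumes "a \<le> b" and "u a = u b"
    and u': "\<And>s. s \<in> {a..b} \<Longrightarrow> (u has_vector_derivative u' s) (at s within {a..b})"
  shows "((\<lambda>s. u s \<bullet> u' s) has_integral 0) {a..b}"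
proof -
  have "((\<lambda>s. (u s \<bullet> u s) / 2) has_vector_derivative u s \<bullet> u' s) (at s within {a..b})"
    if "s \<in> {a..b}" for s
    using has_vector_derivative_divide[OF bounded_bilinear.has_vector_derivative[OF
          bounded_bilinear_inner u'[OF that] u'[OF that]], of 2]
    by (simp add: inner_commute)
  from fundamental_theorem_of_calculus[OF \<open>a \<le> b\<close> this] show ?thesis
    using \<open>u a = u b\<close> by simp
qed

lemma C2funE:
  fixes F :: "'a::real_normed_vector \<Rightarrow> 'b::real_normed_vector"
  assumes "C2fun F"
  obtains F' :: "'a \<Rightarrow> 'a \<Rightarrow>\<^sub>L 'b" and F'' :: "'a \<Rightarrow> 'a \<Rightarrow>\<^sub>L 'a \<Rightarrow>\<^sub>L 'b"
  where "\<And>z. (F has_derivative F' z) (at z)" and "\<And>z. (F' has_derivative F'' z) (at z)"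
    and "continuous_on UNIV F''"
  using assms unfolding C2fun_def C1fun_def by blast

type_synonym spacetime = "real \<times> (real^2)"

locale SVE_circulation =
  fixes v :: "real \<Rightarrow> real^2 \<Rightarrow> real^2"
    and D \<rho> \<theta> p :: "real \<Rightarrow> real^2 \<Rightarrow> real"
    and a :: "real \<Rightarrow> real^2 \<Rightarrow> complex"
    and c :: "real \<Rightarrow> real \<Rightarrow> real^2"
    and \<sigma> \<epsilon> Fr \<rho>ref :: real
    and v' :: "spacetime \<Rightarrow> spacetime \<Rightarrow>\<^sub>L (real^2)"
    and \<rho>' \<theta>' p' :: "spacetime \<Rightarrow> spacetime \<Rightarrow>\<^sub>L real"
    and \<rho>'' \<theta>'' :: "spacetime \<Rightarrow> spacetime \<Rightarrow>\<^sub>L spacetime \<Rightarrow>\<^sub>L real"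
    and a' :: "spacetime \<Rightarrow> spacetime \<Rightarrow>\<^sub>L complex"
    and c' :: "real \<times> real \<Rightarrow> (real \<times> real) \<Rightarrow>\<^sub>L (real^2)"
    and c'' :: "real \<times> real \<Rightarrow> (real \<times> real) \<Rightarrow>\<^sub>L (real \<times> real) \<Rightarrow>\<^sub>L (real^2)"
  assumes constants: "\<epsilon> > 0" "\<sigma> \<noteq> 0" "Fr \<noteq> 0" "\<rho>ref > 0"
    and rho_pos: "\<And>t x. \<rho> t x > 0"
    and var_p: "\<And>t x. D t x = 1"
    and adv_D: "\<And>t x. dt D t x + divg (\<lambda>y. D t y *\<^sub>R v t y) x = 0"
    and adv_rho: "\<And>t x. matd v \<rho> t x = 0"
    and var_a: "\<And>t x. complex_of_real (\<sigma>\<^sup>2 / (8 * \<epsilon>\<^sup>2) * D t x * \<rho> t x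
                  * ((matd v \<theta> t x)\<^sup>2 - \<rho>ref / \<rho> t x * Kconst \<sigma> \<epsilon> Fr)) * a t x = 0"
    and adv_a: "\<And>t x. matd v (\<lambda>t x. (cmod (a t x))\<^sup>2) t x = 0"
    and var_v: "\<And>t x i.
        dt (\<lambda>t x. SVE_mom \<sigma> \<epsilon> v D \<rho> \<theta> a t x $ i) t x
        + (\<Sum>j\<in>UNIV. pd (\<lambda>y. v t y $ j * SVE_mom \<sigma> \<epsilon> v D \<rho> \<theta> a t y $ i) j x)
        + (\<Sum>j\<in>UNIV. SVE_mom \<sigma> \<epsilon> v D \<rho> \<theta> a t x $ j * pd (\<lambda>y. v t y $ j) i x)
        = D t x * pd (SVE_dD \<sigma> \<epsilon> Fr \<rho>ref v \<rho> \<theta> a p t) i x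
          - SVE_drho \<sigma> \<epsilon> v D \<theta> a t x * pd (\<rho> t) i x"
    and loop_closed: "\<And>t. c t 0 = c t 1"
    and loop_flow: "\<And>t s. ((\<lambda>\<tau>. c \<tau> s) has_vector_derivative v t (c t s)) (at t)"
    and v_deriv: "\<And>z. ((\<lambda>z. v (fst z) (snd z)) has_derivative v' z) (at z)"
    and v'_cont: "continuous_on UNIV v'"
    and rho_deriv: "\<And>z. ((\<lambda>z. \<rho> (fst z) (snd z)) has_derivative \<rho>' z) (at z)"
    and rho'_deriv: "\<And>z. (\<rho>' has_derivative \<rho>'' z) (at z)"
    and rho''_cont: "continuous_on UNIV \<rho>''"
    and theta_deriv: "\<And>z. ((\<lambda>z. \<theta> (fst z) (snd z)) has_derivative \<theta>' z) (at z)"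
    and theta'_deriv: "\<And>z. (\<theta>' has_derivative \<theta>'' z) (at z)"
    and theta''_cont: "continuous_on UNIV \<theta>''"
    and p_deriv: "\<And>z. ((\<lambda>z. p (fst z) (snd z)) has_derivative p' z) (at z)"
    and p'_cont: "continuous_on UNIV p'"
    and a_deriv: "\<And>z. ((\<lambda>z. a (fst z) (snd z)) has_derivative a' z) (at z)"
    and c_deriv: "\<And>w. ((\<lambda>w. c (fst w) (snd w)) has_derivative c' w) (at w)"
    and c'_deriv: "\<And>w. (c' has_derivative c'' w) (at w)"
    and c''_cont: "continuous_on UNIV c''"
begin

text \<open>q is d\<theta>/dt, and V = (1, v) is the space-time velocity, so that the material derivative
  of a field f is f' (V z).\<close>
definition "\<kappa> = \<rho>ref * Kconst \<sigma> \<epsilon> Fr"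
definition "N z = waveN \<sigma> \<epsilon> a (fst z) (snd z)"
definition "q z = matd v \<theta> (fst z) (snd z)"
definition "V z = (1::real, v (fst z) (snd z))"
definition "N' z k = \<sigma>\<^sup>2 / (4 * \<epsilon>\<^sup>2) * (2 * (a (fst z) (snd z) \<bullet> a' z k))"
definition "q' z k = \<theta>'' z k (V z) + \<theta>' z (0, v' z k)"

lemma kappa_pos: "\<kappa> > 0"
  using constants by (simp add: \<kappa>_def Kconst_def)

lemma rho_nonzero [simp]: "\<rho> t x \<noteq> 0"
  using rho_pos[of t x] by simp

lemma q_eq: "q z = \<theta>' z (V z)"
  using matd_eq_derivative[OF theta_deriv, of v "fst z" "snd z"] by (simp add: q_def V_def)

lemma V_deriv: "(V has_derivative (\<lambda>k. (0, v' z k))) (at z)"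
  unfolding V_def[abs_def] by (auto intro!: derivative_eq_intros v_deriv)

lemma q_deriv: "(q has_derivative q' z) (at z)"
proof -
  have "((\<lambda>z. \<theta>' z (V z)) has_derivative q' z) (at z)"
    unfolding q'_def[abs_def]
    by (auto intro!: derivative_eq_intros theta'_deriv V_deriv simp: add.commute)
  then show ?thesis by (simp add: q_eq[abs_def])
qed

lemma N_deriv: "(N has_derivative N' z) (at z)"
proof -
  have "((\<lambda>z. \<sigma>\<^sup>2 / (4 * \<epsilon>\<^sup>2) * (a (fst z) (snd z) \<bullet> a (fst z) (snd z))) has_derivative
      (\<lambda>k. \<sigma>\<^sup>2 / (4 * \<epsilon>\<^sup>2) * (a (fst z) (snd z) \<bullet> a' z k + a' z k \<bullet> a (fst z) (snd z)))) (at z)"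
    by (intro has_derivative_mult_right has_derivative_inner a_deriv)
  then show ?thesis
    by (simp add: N_def[abs_def] N'_def[abs_def] waveN_def power2_norm_eq_inner inner_commute)
qed

lemma v_component_deriv:
  "((\<lambda>z. v (fst z) (snd z) $ j) has_derivative (\<lambda>k. v' z k $ j)) (at z)"
  using bounded_linear.has_derivative[OF bounded_linear_vec_nth v_deriv] .

lemma div_v_eq_0: "(\<Sum>j\<in>UNIV. v' z (0, axis j 1) $ j) = 0"
proof -
  obtain t x where z: "z = (t, x)" by (cases z)
  have "dt D t x = 0" and "(\<lambda>y. D t y *\<^sub>R v t y) = v t"
    unfolding dt_def using var_p by simp_all
  then have "divg (v t) x = 0" using adv_D[of t x] by simp
  then show ?thesis
    unfolding divg_def z using pd_eq_derivative[OF v_component_deriv] by simp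
qed

lemma rho_advected: "\<rho>' z (V z) = 0"
  using matd_eq_derivative[OF rho_deriv, of v "fst z" "snd z"] adv_rho by (simp add: V_def)

lemma N_advected: "N' z (V z) = 0"
proof -
  have "((\<lambda>z. (cmod (a (fst z) (snd z)))\<^sup>2) has_derivative (\<lambda>k. 2 * (a (fst z) (snd z) \<bullet> a' z k))) (at z)"
    for z
    using has_derivative_inner[OF a_deriv a_deriv, of z]
    by (simp add: power2_norm_eq_inner inner_commute)
  from matd_eq_derivative[OF this, of v "fst z" "snd z"] show ?thesis
    using adv_a by (simp add: N'_def V_def)
qed

lemma rho_gradient_advected: "\<rho>'' z k (V z) = - \<rho>' z (0, v' z k)"
proof -
  have "((\<lambda>z. \<rho>' z (V z)) has_derivative (\<lambda>k. \<rho>' z (0, v' z k) + \<rho>'' z k (V z))) (at z)"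
    by (auto intro!: derivative_eq_intros rho'_deriv V_deriv)
  moreover have "((\<lambda>z. \<rho>' z (V z)) has_derivative (\<lambda>k. 0)) (at z)"
    by (simp add: rho_advected)
  ultimately have "(\<lambda>k. \<rho>' z (0, v' z k) + \<rho>'' z k (V z)) = (\<lambda>k. 0)"
    by (rule has_derivative_unique)
  then show ?thesis by (metis add_eq_0_iff)
qed

lemma dispersion_relation:
  assumes "a (fst z) (snd z) \<noteq> 0"
  shows "(q z)\<^sup>2 = \<kappa> / \<rho> (fst z) (snd z)"
proof -
  have "\<sigma>\<^sup>2 / (8 * \<epsilon>\<^sup>2) * D (fst z) (snd z) * \<rho> (fst z) (snd z)
      * ((q z)\<^sup>2 - \<rho>ref / \<rho> (fst z) (snd z) * Kconst \<sigma> \<epsilon> Fr) = 0"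
    using var_a[of "fst z" "snd z"] assms unfolding q_def
    by (simp only: mult_eq_0_iff of_real_eq_0_iff) blast
  then show ?thesis
    using constants by (simp add: \<kappa>_def var_p)
qed

lemma N_dispersion_relation: "N z * ((q z)\<^sup>2 - \<kappa> / \<rho> (fst z) (snd z)) = 0"
  by (cases "a (fst z) (snd z) = 0") (simp_all add: N_def waveN_def dispersion_relation)

definition "g z = - (N z * q z) / (2 * \<rho> (fst z) (snd z))"

text \<open>Where a \<noteq> 0 this is the derivative of the dispersion relation; where a = 0, N vanishes.\<close>
lemma N_q'_eq: "N z * q' z k = g z * \<rho>' z k"
proof (cases "a (fst z) (snd z) = 0")
  case True
  then show ?thesis by (simp add: g_def N_def waveN_def)
next
  case False
  let ?\<rho> = "\<lambda>z. \<rho> (fst z) (snd z)"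
  have "continuous_on UNIV (\<lambda>z. a (fst z) (snd z))"
    by (rule has_derivative_continuous_on) (rule a_deriv)
  then have S_open: "open {y. a (fst y) (snd y) \<noteq> 0}"
    by (rule open_Collect_neq) (rule continuous_on_const)
  have q2_deriv: "((\<lambda>y. (q y)\<^sup>2) has_derivative (\<lambda>k. 2 * q z * q' z k)) (at z)"
    using has_derivative_power[OF q_deriv, of 2] by (simp add: ac_simps)
  have "((\<lambda>y. \<kappa> / ?\<rho> y) has_derivative (\<lambda>k. 2 * q z * q' z k)) (at z)"
    by (rule has_derivative_transform_within_open[OF q2_deriv S_open])
      (simp_all add: False dispersion_relation)
  moreover have "((\<lambda>y. \<kappa> / ?\<rho> y) has_derivative (\<lambda>k. - (\<kappa> * \<rho>' z k) / (?\<rho> z)\<^sup>2)) (at z)"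
    by (auto intro!: derivative_eq_intros rho_deriv simp: power2_eq_square field_simps)
  ultimately have "(\<lambda>k. 2 * q z * q' z k) = (\<lambda>k. - (\<kappa> * \<rho>' z k) / (?\<rho> z)\<^sup>2)"
    by (rule has_derivative_unique)
  then have "2 * q z * q' z k = - (\<kappa> * \<rho>' z k) / (?\<rho> z)\<^sup>2"
    by (rule fun_cong)
  also have "\<dots> = - (q z * q z * \<rho>' z k) / ?\<rho> z"
    using dispersion_relation[OF False] by (simp add: power2_eq_square)
  finally have "q z * (2 * q' z k) = q z * (- q z * \<rho>' z k / ?\<rho> z)"
    by simp
  moreover have "q z \<noteq> 0"
    using dispersion_relation[OF False] kappa_pos by auto
  ultimately have "2 * q' z k = - q z * \<rho>' z k / ?\<rho> z"
    by (metis mult_left_cancel)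
  then show ?thesis by (simp add: g_def field_simps)
qed

definition "g' z k = - (N' z k * q z + N z * q' z k) / (2 * \<rho> (fst z) (snd z))
  + N z * q z * \<rho>' z k / (2 * (\<rho> (fst z) (snd z))\<^sup>2)"

lemma g_deriv: "(g has_derivative g' z) (at z)"
  unfolding g_def[abs_def] g'_def
  by (auto intro!: derivative_eq_intros N_deriv q_deriv rho_deriv simp: field_simps power2_eq_square)

lemma g_advected: "g' z (V z) = 0"
  using N_q'_eq[of z "V z"] by (simp add: g'_def N_advected rho_advected)

lemma SVE_mom_eq:
  "SVE_mom \<sigma> \<epsilon> v D \<rho> \<theta> a t x $ i
    = \<rho> t x * (v t x $ i + N (t, x) * q (t, x) * \<theta>' (t, x) (0, axis i 1))"
  using pd_eq_derivative[OF theta_deriv]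
  by (simp add: SVE_mom_def var_p grad_def N_def q_def)

definition "mom' i z k =
  \<rho>' z k * (v (fst z) (snd z) $ i + N z * q z * \<theta>' z (0, axis i 1))
  + \<rho> (fst z) (snd z) * (v' z k $ i + (N' z k * q z + N z * q' z k) * \<theta>' z (0, axis i 1)
      + N z * q z * \<theta>'' z k (0, axis i 1))"

lemma mom_deriv:
  "((\<lambda>z. SVE_mom \<sigma> \<epsilon> v D \<rho> \<theta> a (fst z) (snd z) $ i) has_derivative mom' i z) (at z)"
  unfolding SVE_mom_eq mom'_def
  by (auto intro!: derivative_eq_intros N_deriv q_deriv rho_deriv theta'_deriv v_component_deriv
      simp: algebra_simps)

lemma mom'_flow:
  "mom' i z (V z) = \<rho> (fst z) (snd z) * (v' z (V z) $ i + N z * q z * \<theta>'' z (V z) (0, axis i 1))"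
  using N_q'_eq[of z "V z"] by (simp add: mom'_def rho_advected N_advected)

lemma theta''_flow: "\<theta>'' z (V z) (0, axis i 1) = q' z (0, axis i 1) - \<theta>' z (0, v' z (0, axis i 1))"
  using second_derivative_symmetric[OF theta_deriv theta'_deriv theta''_cont] by (simp add: q'_def)

lemma euler_poincare_transport_eq:
  fixes t :: real and x :: "real^2"
  defines "z \<equiv> (t, x)"
  shows "dt (\<lambda>t x. SVE_mom \<sigma> \<epsilon> v D \<rho> \<theta> a t x $ i) t x
      + (\<Sum>j\<in>UNIV. pd (\<lambda>y. v t y $ j * SVE_mom \<sigma> \<epsilon> v D \<rho> \<theta> a t y $ i) j x)
      + (\<Sum>j\<in>UNIV. SVE_mom \<sigma> \<epsilon> v D \<rho> \<theta> a t x $ j * pd (\<lambda>y. v t y $ j) i x)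
    = \<rho> t x * (v' z (V z) $ i + N z * q z * q' z (0, axis i 1) + v t x \<bullet> v' z (0, axis i 1))"
proof -
  let ?m = "\<lambda>t x. SVE_mom \<sigma> \<epsilon> v D \<rho> \<theta> a t x"
  have "linear (mom' i z)" and "linear (\<theta>' z)"
    by (rule has_derivative_linear[OF mom_deriv], rule has_derivative_linear[OF theta_deriv])
  have "dt (\<lambda>t x. ?m t x $ i) t x = mom' i z (1, 0)"
    using dt_eq_derivative[where f="\<lambda>t x. ?m t x $ i", OF mom_deriv] by (simp add: z_def)
  moreover have "pd (\<lambda>y. v t y $ j * ?m t y $ i) j x
      = v' z (0, axis j 1) $ j * ?m t x $ i + v t x $ j * mom' i z (0, axis j 1)" for j
    using pd_eq_derivative[where f="\<lambda>t y. v t y $ j * ?m t y $ i",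
        OF has_derivative_mult[OF v_component_deriv mom_deriv]]
    by (simp add: z_def)
  moreover have "mom' i z (1, 0) + (\<Sum>j\<in>UNIV. v t x $ j * mom' i z (0, axis j 1)) = mom' i z (V z)"
    using linear_Pair_split[OF \<open>linear (mom' i z)\<close>, of 1 "v t x"]
      linear_Pair_zero_sum[OF \<open>linear (mom' i z)\<close>, of "v t x"]
    by (simp add: V_def z_def)
  ultimately have transport: "dt (\<lambda>t x. ?m t x $ i) t x
      + (\<Sum>j\<in>UNIV. pd (\<lambda>y. v t y $ j * ?m t y $ i) j x) = mom' i z (V z)"
    using div_v_eq_0[of z] by (simp add: sum.distrib flip: sum_distrib_right)
  have "pd (\<lambda>y. v t y $ j) i x = v' z (0, axis i 1) $ j" for j
    using pd_eq_derivative[OF v_component_deriv] by (simp add: z_def)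
  moreover note linear_Pair_zero_sum[OF \<open>linear (\<theta>' z)\<close>, of "v' z (0, axis i 1)"]
  ultimately have stretching: "(\<Sum>j\<in>UNIV. ?m t x $ j * pd (\<lambda>y. v t y $ j) i x)
      = \<rho> t x * (v t x \<bullet> v' z (0, axis i 1) + N z * q z * \<theta>' z (0, v' z (0, axis i 1)))"
    by (simp add: SVE_mom_eq z_def inner_vec_def distrib_left distrib_right sum.distrib
        sum_distrib_left mult_ac)
  show ?thesis
    unfolding transport stretching mom'_flow theta''_flow
    by (simp add: z_def algebra_simps)
qed

lemma SVE_dD_eq: "SVE_dD \<sigma> \<epsilon> Fr \<rho>ref v \<rho> \<theta> a p t x = \<rho> t x * (v t x \<bullet> v t x) / 2 - p t x"
proof -
  have "waveN \<sigma> \<epsilon> a t x / 2 * \<rho> t x * ((matd v \<theta> t x)\<^sup>2 - \<rho>ref / \<rho> t x * Kconst \<sigma> \<epsilon> Fr) = 0"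
    using N_dispersion_relation[of "(t, x)"] by (simp add: N_def q_def \<kappa>_def)
  then show ?thesis
    by (simp add: SVE_dD_def power2_norm_eq_inner)
qed

lemma SVE_dD_deriv:
  "((\<lambda>z. SVE_dD \<sigma> \<epsilon> Fr \<rho>ref v \<rho> \<theta> a p (fst z) (snd z)) has_derivative
    (\<lambda>k. \<rho>' z k * (v (fst z) (snd z) \<bullet> v (fst z) (snd z)) / 2
      + \<rho> (fst z) (snd z) * (v (fst z) (snd z) \<bullet> v' z k) - p' z k)) (at z)"
  unfolding SVE_dD_eq
  by (auto intro!: derivative_eq_intros rho_deriv v_deriv p_deriv simp: inner_commute algebra_simps)

lemma euler_poincare_force_eq:
  fixes t :: real and x :: "real^2"
  defines "z \<equiv> (t, x)"
  shows "D t x * pd (SVE_dD \<sigma> \<epsilon> Fr \<rho>ref v \<rho> \<theta> a p t) i x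
      - SVE_drho \<sigma> \<epsilon> v D \<theta> a t x * pd (\<rho> t) i x
    = \<rho> t x * (v t x \<bullet> v' z (0, axis i 1)) - p' z (0, axis i 1)
      - N z * (q z)\<^sup>2 / 2 * \<rho>' z (0, axis i 1)"
  using pd_eq_derivative[where f="SVE_dD \<sigma> \<epsilon> Fr \<rho>ref v \<rho> \<theta> a p", OF SVE_dD_deriv]
    pd_eq_derivative[OF rho_deriv]
  by (simp add: SVE_drho_def var_p power2_norm_eq_inner N_def q_def z_def algebra_simps)

lemma material_acceleration: "\<rho> t x *\<^sub>R v' (t, x) (V (t, x)) = - grad (p t) x"
proof (rule vec_eq_iff[THEN iffD2], rule allI)
  fix i :: 2
  let ?z = "(t, x)" and ?e = "(0, axis i 1) :: spacetime"
  have "\<rho> t x * (N ?z * q ?z * q' ?z ?e) = \<rho> t x * q ?z * (N ?z * q' ?z ?e)"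
    by (simp add: ac_simps)
  also have "\<dots> = - N ?z * (q ?z)\<^sup>2 / 2 * \<rho>' ?z ?e"
    by (simp add: N_q'_eq g_def power2_eq_square field_simps)
  finally have "\<rho> t x * (N ?z * q ?z * q' ?z ?e) = - N ?z * (q ?z)\<^sup>2 / 2 * \<rho>' ?z ?e" .
  moreover have "grad (p t) x $ i = p' ?z ?e"
    using pd_eq_derivative[OF p_deriv] by (simp add: grad_def)
  ultimately show "(\<rho> t x *\<^sub>R v' ?z (V ?z)) $ i = (- grad (p t) x) $ i"
    using var_v[where t=t and x=x and i=i] unfolding euler_poincare_transport_eq euler_poincare_force_eq
    by (simp add: algebra_simps)
qed

definition "tangent t s = vector_derivative (c t) (at s)"

lemma loop_has_tangent: "(c t has_vector_derivative c' (t, s) (0, 1)) (at s)"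
  using has_vector_derivative_snd_slice[OF c_deriv[of "(t, s)"]] by simp

lemma tangent_eq: "tangent t s = c' (t, s) (0, 1)"
  unfolding tangent_def by (rule vector_derivative_at[OF loop_has_tangent])

lemma loop_velocity: "c' (t, s) (1, 0) = v t (c t s)"
  using has_vector_derivative_fst_slice[OF c_deriv[of "(t, s)"]] loop_flow[of s t]
  by (simp add: vector_derivative_unique_at)

lemma has_vector_derivative_along_flow:
  assumes "(F has_derivative F') (at (t, c t s))"
  shows "((\<lambda>\<tau>. F (\<tau>, c \<tau> s)) has_vector_derivative F' (V (t, c t s))) (at t)"
proof (rule vector_derivative_chain_at[where g="\<lambda>\<tau>. (\<tau>, c \<tau> s)"])
  show "((\<lambda>\<tau>. (\<tau>, c \<tau> s)) has_vector_derivative V (t, c t s)) (at t)"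
    unfolding V_def by (auto intro!: derivative_eq_intros loop_flow)
qed (use assms in simp)

lemma has_vector_derivative_along_loop:
  assumes "(F has_derivative F') (at (t, c t s))"
  shows "((\<lambda>\<sigma>. F (t, c t \<sigma>)) has_vector_derivative F' (0, tangent t s)) (at s)"
proof (rule vector_derivative_chain_at[where g="\<lambda>\<sigma>. (t, c t \<sigma>)"])
  show "((\<lambda>\<sigma>. (t, c t \<sigma>)) has_vector_derivative (0, tangent t s)) (at s)"
    unfolding tangent_eq by (auto intro!: derivative_eq_intros loop_has_tangent)
qed (use assms in simp)

lemma tangent_transport:
  "((\<lambda>\<tau>. tangent \<tau> s) has_vector_derivative v' (t, c t s) (0, tangent t s)) (at t)"
proof -
  have c'_apply: "((\<lambda>w. c' w d) has_derivative (\<lambda>k. c'' w k d)) (at w)" for w d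
    by (auto intro!: derivative_eq_intros c'_deriv)
  have "((\<lambda>\<sigma>. c' (t, \<sigma>) (1, 0)) has_vector_derivative c'' (t, s) (0, 1) (1, 0)) (at s)"
    using has_vector_derivative_snd_slice[OF c'_apply] .
  moreover have "((\<lambda>\<sigma>. c' (t, \<sigma>) (1, 0)) has_vector_derivative v' (t, c t s) (0, tangent t s)) (at s)"
    unfolding loop_velocity using has_vector_derivative_along_loop[OF v_deriv] by simp
  ultimately have "c'' (t, s) (0, 1) (1, 0) = v' (t, c t s) (0, tangent t s)"
    by (rule vector_derivative_unique_at)
  moreover have "((\<lambda>\<tau>. tangent \<tau> s) has_vector_derivative c'' (t, s) (1, 0) (0, 1)) (at t)"
    unfolding tangent_eq by (rule has_vector_derivative_fst_slice[OF c'_apply])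
  ultimately show ?thesis
    using second_derivative_symmetric[OF c_deriv c'_deriv c''_cont, of "(t, s)" "(1, 0)" "(0, 1)"]
    by simp
qed

lemma g_along_flow: "((\<lambda>\<tau>. g (\<tau>, c \<tau> s)) has_vector_derivative 0) (at t)"
  using has_vector_derivative_along_flow[OF g_deriv] by (simp add: g_advected)

lemma rho_gradient_along_flow:
  "((\<lambda>\<tau>. \<rho>' (\<tau>, c \<tau> s) (0, tangent \<tau> s)) has_vector_derivative 0) (at t)"
proof -
  let ?w = "(t, c t s)"
  have "((\<lambda>\<tau>. \<rho>' (\<tau>, c \<tau> s) (0, tangent \<tau> s)) has_vector_derivative
      \<rho>' ?w (0, v' ?w (0, tangent t s)) + \<rho>'' ?w (V ?w) (0, tangent t s)) (at t)"
    by (rule bounded_bilinear.has_vector_derivative[OF bounded_bilinear_blinfun_apply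
          has_vector_derivative_along_flow[OF rho'_deriv]])
      (auto intro!: derivative_eq_intros tangent_transport)
  moreover have "\<rho>'' ?w (V ?w) (0, tangent t s) = - \<rho>' ?w (0, v' ?w (0, tangent t s))"
    using second_derivative_symmetric[OF rho_deriv rho'_deriv rho''_cont] rho_gradient_advected
    by metis
  ultimately show ?thesis by simp
qed

definition "circulation_density t s =
  v t (c t s) \<bullet> tangent t s + g (t, c t s) * \<rho>' (t, c t s) (0, tangent t s)"

definition "kinetic_density t s = v t (c t s) \<bullet> v' (t, c t s) (0, tangent t s)"

definition "pressure_density t s = p' (t, c t s) (0, tangent t s) / \<rho> t (c t s)"

lemma circulation_density_eq:
  "(v t (c t s) + waveN \<sigma> \<epsilon> a t (c t s) *\<^sub>R grad (matd v \<theta> t) (c t s)) \<bullet> vector_derivative (c t) (at s)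
    = circulation_density t s"
proof -
  have "((\<lambda>z. matd v \<theta> (fst z) (snd z)) has_derivative q' z) (at z)" for z
    using q_deriv by (simp add: q_def[abs_def])
  then have "grad (matd v \<theta> t) (c t s) \<bullet> tangent t s = q' (t, c t s) (0, tangent t s)"
    by (rule grad_inner_eq_derivative)
  then show ?thesis
    using N_q'_eq[of "(t, c t s)" "(0, tangent t s)"]
    by (simp add: circulation_density_def inner_add_left N_def flip: tangent_def)
qed

lemma circulation_density_has_vector_derivative:
  "((\<lambda>\<tau>. circulation_density \<tau> s) has_vector_derivative
      kinetic_density t s - pressure_density t s) (at t)"
proof -
  let ?w = "(t, c t s)"
  have "\<rho> t (c t s) * (v' ?w (V ?w) \<bullet> tangent t s) = - p' ?w (0, tangent t s)"
    using arg_cong[OF material_acceleration, of "\<lambda>u. u \<bullet> tangent t s"]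
      grad_inner_eq_derivative[OF p_deriv]
    by simp
  then have acceleration: "v' ?w (V ?w) \<bullet> tangent t s = - p' ?w (0, tangent t s) / \<rho> t (c t s)"
    by (simp add: field_simps)
  have "((\<lambda>\<tau>. v \<tau> (c \<tau> s)) has_vector_derivative v' ?w (V ?w)) (at t)"
    using has_vector_derivative_along_flow[OF v_deriv] by simp
  then have "((\<lambda>\<tau>. circulation_density \<tau> s) has_vector_derivative
      (v t (c t s) \<bullet> v' ?w (0, tangent t s) + v' ?w (V ?w) \<bullet> tangent t s)
      + (g ?w * 0 + 0 * \<rho>' ?w (0, tangent t s))) (at t)"
    unfolding circulation_density_def
    by (intro has_vector_derivative_add has_vector_derivative_mult g_along_flow rho_gradient_along_flow
        bounded_bilinear.has_vector_derivative[OF bounded_bilinear_inner] tangent_transport)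
  then show ?thesis by (simp add: acceleration kinetic_density_def pressure_density_def)
qed

lemma continuous_on_along_loop:
  assumes "continuous_on UNIV F"
  shows "continuous_on S (\<lambda>w. F (fst w, c (fst w) (snd w)))"
proof -
  have "continuous_on UNIV (\<lambda>w. c (fst w) (snd w))"
    by (rule has_derivative_continuous_on) (rule c_deriv)
  then have "continuous_on S (\<lambda>w. c (fst w) (snd w))"
    by (rule continuous_on_subset) simp
  then show ?thesis
    by (auto intro!: continuous_intros continuous_on_compose2[OF assms])
qed

lemma continuous_on_tangent: "continuous_on S (\<lambda>w. tangent (fst w) (snd w))"
proof -
  have "continuous_on UNIV c'"
    by (rule has_derivative_continuous_on) (rule c'_deriv)
  then show ?thesis
    unfolding tangent_eq by (auto intro!: continuous_intros continuous_on_compose2[of UNIV c'])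
qed

lemma continuous_on_circulation_density:
  "continuous_on S (\<lambda>w. circulation_density (fst w) (snd w))"
proof -
  have "continuous_on UNIV (\<lambda>z. v (fst z) (snd z))" "continuous_on UNIV g" "continuous_on UNIV \<rho>'"
    by (rule has_derivative_continuous_on, rule v_deriv g_deriv rho'_deriv)+
  from this[THEN continuous_on_along_loop] show ?thesis
    unfolding circulation_density_def by (auto intro!: continuous_intros continuous_on_tangent)
qed

lemma continuous_on_kinetic_density: "continuous_on S (\<lambda>w. kinetic_density (fst w) (snd w))"
proof -
  have "continuous_on UNIV (\<lambda>z. v (fst z) (snd z))"
    by (rule has_derivative_continuous_on) (rule v_deriv)
  from this[THEN continuous_on_along_loop] v'_cont[THEN continuous_on_along_loop] show ?thesis
    unfolding kinetic_density_def by (auto intro!: continuous_intros continuous_on_tangent)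
qed

lemma continuous_on_pressure_density: "continuous_on S (\<lambda>w. pressure_density (fst w) (snd w))"
proof -
  have "continuous_on UNIV (\<lambda>z. \<rho> (fst z) (snd z))"
    by (rule has_derivative_continuous_on) (rule rho_deriv)
  from this[THEN continuous_on_along_loop] p'_cont[THEN continuous_on_along_loop] show ?thesis
    unfolding pressure_density_def by (auto intro!: continuous_intros continuous_on_tangent)
qed

lemma kinetic_density_integral: "(kinetic_density t has_integral 0) {0..1}"
  unfolding kinetic_density_def
  by (rule has_integral_inner_derivative_closed)
    (use loop_closed has_vector_derivative_along_loop[OF v_deriv] in
      \<open>auto intro: has_vector_derivative_at_within\<close>)

lemma pressure_density_integral:
  "(pressure_density t has_integral circ (\<lambda>r. (1 / \<rho> t r) *\<^sub>R grad (p t) r) (c t)) {0..1}"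
proof -
  have "pressure_density t integrable_on {0..1}"
    by (rule integrable_continuous_interval, rule continuous_on_slice, rule continuous_on_pressure_density)
  from integrable_integral[OF this] show ?thesis
    unfolding circ_def pressure_density_def
    by (simp add: grad_inner_eq_derivative[OF p_deriv] flip: tangent_def)
qed

lemma circulation_has_real_derivative:
  "((\<lambda>t. circ (\<lambda>r. v t r + waveN \<sigma> \<epsilon> a t r *\<^sub>R grad (matd v \<theta> t) r) (c t))
    has_real_derivative - circ (\<lambda>r. (1 / \<rho> t r) *\<^sub>R grad (p t) r) (c t)) (at t)"
proof -
  have "((\<lambda>t. integral (cbox 0 1) (circulation_density t)) has_real_derivative
      integral (cbox 0 1) (\<lambda>s. kinetic_density t s - pressure_density t s)) (at t within UNIV)"
  proof (rule leibniz_rule_field_derivative)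
    show "((\<lambda>t. circulation_density t s) has_real_derivative kinetic_density t s - pressure_density t s)
        (at t within UNIV)" for t s
      using circulation_density_has_vector_derivative
      by (simp add: has_real_derivative_iff_has_vector_derivative)
    show "circulation_density t integrable_on cbox 0 1" for t
      by (rule integrable_continuous, rule continuous_on_slice,
          rule continuous_on_circulation_density)
    show "continuous_on (UNIV \<times> cbox 0 1) (\<lambda>(t, s). kinetic_density t s - pressure_density t s)"
      unfolding split_beta
      by (intro continuous_intros continuous_on_kinetic_density continuous_on_pressure_density)
  qed auto
  moreover have "integral (cbox 0 1) (\<lambda>s. kinetic_density t s - pressure_density t s)
      = - circ (\<lambda>r. (1 / \<rho> t r) *\<^sub>R grad (p t) r) (c t)"
    using has_integral_diff[OF kinetic_density_integral pressure_density_integral]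
    by (simp add: integral_unique)
  moreover have "circ (\<lambda>r. v t r + waveN \<sigma> \<epsilon> a t r *\<^sub>R grad (matd v \<theta> t) r) (c t)
      = integral (cbox 0 1) (circulation_density t)" for t
    by (simp add: circ_def circulation_density_eq)
  ultimately show ?thesis by simp
qed

end

theorem mainTheorem4:
  fixes v :: "real \<Rightarrow> real^2 \<Rightarrow> real^2"
    and D \<rho> \<theta> p :: "real \<Rightarrow> real^2 \<Rightarrow> real"
    and a :: "real \<Rightarrow> real^2 \<Rightarrow> complex"
    and c :: "real \<Rightarrow> real \<Rightarrow> real^2"
    and \<sigma> \<epsilon> Fr \<rho>ref :: real
  assumes constants: "\<epsilon> > 0" "\<sigma> \<noteq> 0" "Fr \<noteq> 0" "\<rho>ref > 0"
    and smooth: "smooth2 v" "smooth2 D" "smooth2 \<rho>" "smooth2 \<theta>" "smooth2 p" "smooth2 a"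
    and rho_pos: "\<And>t x. \<rho> t x > 0"
    \<comment> \<open>variation in p: incompressibility constraint\<close>
    and var_p: "\<And>t x. D t x = 1"
    \<comment> \<open>advection of the areal density D d^2r and of the buoyancy rho\<close>
    and adv_D: "\<And>t x. dt D t x + divg (\<lambda>y. D t y *\<^sub>R v t y) x = 0"
    and adv_rho: "\<And>t x. matd v \<rho> t x = 0"
    \<comment> \<open>variation in the amplitude a (Euler-Lagrange equation w.r.t. conj a)\<close>
    and var_a: "\<And>t x. complex_of_real (\<sigma>\<^sup>2 / (8 * \<epsilon>\<^sup>2) * D t x * \<rho> t x
                  * ((matd v \<theta> t x)\<^sup>2 - \<rho>ref / \<rho> t x * Kconst \<sigma> \<epsilon> Fr)) * a t x = 0"
    \<comment> \<open>variation in theta: conservation of wave action\<close>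
    and var_theta: "\<And>t x. dt (\<lambda>t x. waveN \<sigma> \<epsilon> a t x * D t x * \<rho> t x * matd v \<theta> t x) t x
                  + divg (\<lambda>y. (waveN \<sigma> \<epsilon> a t y * D t y * \<rho> t y * matd v \<theta> t y) *\<^sub>R v t y) x = 0"
    \<comment> \<open>advection of |a|^2\<close>
    and adv_a: "\<And>t x. matd v (\<lambda>t x. (cmod (a t x))\<^sup>2) t x = 0"
    \<comment> \<open>Euler-Poincare equation (variation in v), componentwise:
        (\<partial>_t + ad^*_v) \<delta>l/\<delta>v = D grad(\<delta>l/\<delta>D) - (\<delta>l/\<delta>rho) grad rho\<close>
    and var_v: "\<And>t x i.
        dt (\<lambda>t x. SVE_mom \<sigma> \<epsilon> v D \<rho> \<theta> a t x $ i) t x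
        + (\<Sum>j\<in>UNIV. pd (\<lambda>y. v t y $ j * SVE_mom \<sigma> \<epsilon> v D \<rho> \<theta> a t y $ i) j x)
        + (\<Sum>j\<in>UNIV. SVE_mom \<sigma> \<epsilon> v D \<rho> \<theta> a t x $ j * pd (\<lambda>y. v t y $ j) i x)
        = D t x * pd (SVE_dD \<sigma> \<epsilon> Fr \<rho>ref v \<rho> \<theta> a p t) i x
          - SVE_drho \<sigma> \<epsilon> v D \<theta> a t x * pd (\<rho> t) i x"
    \<comment> \<open>the closed loop c(t) is carried by the horizontal flow\<close>
    and loop_smooth: "C2fun (\<lambda>z. c (fst z) (snd z))"
    and loop_closed: "\<And>t. c t 0 = c t 1"
    and loop_flow: "\<And>t s. ((\<lambda>\<tau>. c \<tau> s) has_vector_derivative v t (c t s)) (at t)"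
  shows "\<And>t. ((\<lambda>t. circ (\<lambda>r. v t r + waveN \<sigma> \<epsilon> a t r *\<^sub>R grad (matd v \<theta> t) r) (c t))
             has_real_derivative
               (- circ (\<lambda>r. (1 / \<rho> t r) *\<^sub>R grad (p t) r) (c t))) (at t)"
proof -
  obtain v' v''
    where v_deriv: "\<And>z. ((\<lambda>z. v (fst z) (snd z)) has_derivative blinfun_apply (v' z)) (at z)"
      and v'_deriv: "\<And>z. (v' has_derivative blinfun_apply (v'' z)) (at z)" and "continuous_on UNIV v''"
    using smooth(1) unfolding smooth2_def by (rule C2funE) blast
  have v'_cont: "continuous_on UNIV v'"
    by (rule has_derivative_continuous_on) (rule v'_deriv)
  obtain \<rho>' \<rho>''
    where rho_deriv: "\<And>z. ((\<lambda>z. \<rho> (fst z) (snd z)) has_derivative blinfun_apply (\<rho>' z)) (at z)"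
      and rho'_deriv: "\<And>z. (\<rho>' has_derivative blinfun_apply (\<rho>'' z)) (at z)" and rho''_cont: "continuous_on UNIV \<rho>''"
    using smooth(3) unfolding smooth2_def by (rule C2funE) blast
  obtain \<theta>' \<theta>''
    where theta_deriv: "\<And>z. ((\<lambda>z. \<theta> (fst z) (snd z)) has_derivative blinfun_apply (\<theta>' z)) (at z)"
      and theta'_deriv: "\<And>z. (\<theta>' has_derivative blinfun_apply (\<theta>'' z)) (at z)" and theta''_cont: "continuous_on UNIV \<theta>''"
    using smooth(4) unfolding smooth2_def by (rule C2funE) blast
  obtain p' p''
    where p_deriv: "\<And>z. ((\<lambda>z. p (fst z) (snd z)) has_derivative blinfun_apply (p' z)) (at z)"
      and p'_deriv: "\<And>z. (p' has_derivative blinfun_apply (p'' z)) (at z)" and "continuous_on UNIV p''"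
    using smooth(5) unfolding smooth2_def by (rule C2funE) blast
  have p'_cont: "continuous_on UNIV p'"
    by (rule has_derivative_continuous_on) (rule p'_deriv)
  obtain a' a''
    where a_deriv: "\<And>z. ((\<lambda>z. a (fst z) (snd z)) has_derivative blinfun_apply (a' z)) (at z)"
      and "\<And>z. (a' has_derivative blinfun_apply (a'' z)) (at z)" and "continuous_on UNIV a''"
    using smooth(6) unfolding smooth2_def by (rule C2funE) blast
  obtain c' c''
    where c_deriv: "\<And>w. ((\<lambda>w. c (fst w) (snd w)) has_derivative blinfun_apply (c' w)) (at w)"
      and c'_deriv: "\<And>w. (c' has_derivative blinfun_apply (c'' w)) (at w)" and c''_cont: "continuous_on UNIV c''"
    using loop_smooth by (rule C2funE) blast
  interpret SVE_circulation v D \<rho> \<theta> p a c \<sigma> \<epsilon> Fr \<rho>ref v' \<rho>' \<theta>' p' \<rho>'' \<theta>'' a' c' c''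
    using constants rho_pos var_p adv_D adv_rho var_a adv_a var_v loop_closed loop_flow
      v_deriv v'_cont rho_deriv rho'_deriv rho''_cont
      theta_deriv theta'_deriv theta''_cont p_deriv p'_cont a_deriv
      c_deriv c'_deriv c''_cont
    by (rule SVE_circulation.intro)
  show "\<And>t. ?thesis t" by (rule circulation_has_real_derivative)
qed

end
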